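(* There is an evolutionary graph that is not isothermal but for which, for every $r>1$, the fixation probability of the weighted Moran process with fitness $r$ started from a single uniformly random initial mutant equals $\rho_{\mathrm{reg}}(r,n)=\frac{1-1/r}{1-1/r^n}$, where $n$ is the number of vertices.
   Context: An evolutionary graph is a finite vertex set $V$ together with weights $w_{uv}\ge 0$ for ordered pairs $(u,v)$ (with $w_{uv}=0$ when there is no edge $(u,v)$) such that $\sum_{v\in V}w_{uv}=1$ for every $u\in V$. The weighted Moran process with fitness $r$: initially one vertex is a mutant and the others are non-mutants; at each step a vertex $u$ is chosen with probability proportional to its fitness (mutants $r$, non-mutants $1$), then a vertex $v$ is chosen with probability $w_{uv}$, and the state of $u$ is copied to $v$. Fixation is the event that eventually all vertices are mutants. The evolutionary graph is isothermal if $\sum_{v\in V}w_{vu}=1$ for every $u\in V$. *)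

theory Defs
  imports Complex_Main
begin

definition evolutionary_graph :: "'a set \<Rightarrow> ('a \<Rightarrow> 'a \<Rightarrow> real) \<Rightarrow> bool" where
  "evolutionary_graph V w \<longleftrightarrow> finite V \<and> V \<noteq> {} \<and>
     (\<forall>u\<in>V. \<forall>v\<in>V. w u v \<ge> 0) \<and> (\<forall>u\<in>V. (\<Sum>v\<in>V. w u v) = 1)"

definition isothermal :: "'a set \<Rightarrow> ('a \<Rightarrow> 'a \<Rightarrow> real) \<Rightarrow> bool" where
  "isothermal V w \<longleftrightarrow> (\<forall>u\<in>V. (\<Sum>v\<in>V. w v u) = 1)"

text \<open>One step of the weighted Moran process, as an operator on functions of the state
  (state = set S of mutant vertices): the expected value of f after one step from S.\<close>
definition moran_step :: "'a set \<Rightarrow> ('a \<Rightarrow> 'a \<Rightarrow> real) \<Rightarrow> real \<Rightarrow> ('a set \<Rightarrow> real) \<Rightarrow> 'a set \<Rightarrow> real" where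
  "moran_step V w r f S =
     (let fit = (\<lambda>u. if u \<in> S then r else 1);
          F = (\<Sum>u\<in>V. fit u)
      in \<Sum>u\<in>V. \<Sum>v\<in>V. (fit u / F) * w u v * f (if u \<in> S then insert v S else S - {v}))"

definition all_mutant_prob :: "'a set \<Rightarrow> ('a \<Rightarrow> 'a \<Rightarrow> real) \<Rightarrow> real \<Rightarrow> nat \<Rightarrow> 'a set \<Rightarrow> real" where
  "all_mutant_prob V w r t = (moran_step V w r ^^ t) (\<lambda>S. if S = V then 1 else 0)"

text \<open>Fixation probability: since the all-mutant state is absorbing, the probability of
  eventually reaching it is the limit of the (nondecreasing) t-step probabilities.\<close>
definition fixation_prob :: "'a set \<Rightarrow> ('a \<Rightarrow> 'a \<Rightarrow> real) \<Rightarrow> real \<Rightarrow> 'a set \<Rightarrow> real" where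
  "fixation_prob V w r S = lim (\<lambda>t. all_mutant_prob V w r t S)"

definition fixation_prob_uniform :: "'a set \<Rightarrow> ('a \<Rightarrow> 'a \<Rightarrow> real) \<Rightarrow> real \<Rightarrow> real" where
  "fixation_prob_uniform V w r = (\<Sum>u\<in>V. fixation_prob V w r {u}) / real (card V)"

definition rho_reg :: "real \<Rightarrow> nat \<Rightarrow> real" where
  "rho_reg r n = (1 - 1 / r) / (1 - 1 / r ^ n)"

end

theory Submission
  imports Defs
begin

text \<open>The fixation probability is the unique bounded function h on mutant sets that is invariant
  under one Moran step and takes the values 1 on V and 0 on the empty set: the difference between
  h and the t-step absorption probabilities is again propagated by the Moran step, vanishes on the
  two absorbing states, and shrinks by a factor 1 - \<delta> per step as soon as every transient state
  can be absorbed in one step with probability at least \<delta>.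

  The example is the triangle on {0, 1, 2} in which the hub 0 sends weight 1/2 to each of the
  leaves 1 and 2, while each leaf sends 3/4 to the hub and 1/4 to the other leaf. Its column sums
  are 3/2, 3/4, 3/4, so it is not isothermal. By the symmetry 1 \<leftrightarrow> 2 the invariant function
  has only four unknown values on transient states; solving the four linear equations gives
  h {0} + h {1} + h {2} = 3 r^2 / (r^2 + r + 1) = 3 \<rho>_reg(r, 3).\<close>

definition moran_succ :: "'a set \<Rightarrow> 'a \<Rightarrow> 'a \<Rightarrow> 'a set" where
  "moran_succ S u v = (if u \<in> S then insert v S else S - {v})"

definition moran_prob :: "'a set \<Rightarrow> ('a \<Rightarrow> 'a \<Rightarrow> real) \<Rightarrow> real \<Rightarrow> 'a set \<Rightarrow> 'a \<Rightarrow> 'a \<Rightarrow> real" where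
  "moran_prob V w r S u v =
     (if u \<in> S then r else 1) / (\<Sum>x\<in>V. if x \<in> S then r else 1) * w u v"

lemma moran_step_eq_sum:
  "moran_step V w r f S = (\<Sum>u\<in>V. \<Sum>v\<in>V. moran_prob V w r S u v * f (moran_succ S u v))"
  unfolding moran_step_def moran_prob_def moran_succ_def Let_def ..

lemma moran_step_diff:
  "moran_step V w r (\<lambda>S. f S - g S) S = moran_step V w r f S - moran_step V w r g S"
  unfolding moran_step_eq_sum by (simp add: sum_subtractf right_diff_distrib)

lemma moran_prob_nonneg:
  assumes "evolutionary_graph V w" "r > 0" "u \<in> V" "v \<in> V"
  shows "moran_prob V w r S u v \<ge> 0"
  using assms unfolding evolutionary_graph_def moran_prob_def
  by (auto intro!: mult_nonneg_nonneg divide_nonneg_nonneg sum_nonneg)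

lemma moran_prob_sum:
  assumes G: "evolutionary_graph V w" and r: "r > 0"
  shows "(\<Sum>u\<in>V. \<Sum>v\<in>V. moran_prob V w r S u v) = 1"
proof -
  define fit where "fit u = (if u \<in> S then r else 1)" for u
  from G have fin: "finite V" and ne: "V \<noteq> {}" and rows: "\<And>u. u \<in> V \<Longrightarrow> (\<Sum>v\<in>V. w u v) = 1"
    unfolding evolutionary_graph_def by auto
  have "(\<Sum>u\<in>V. fit u) > 0"
    using fin ne r by (intro sum_pos) (auto simp: fit_def)
  moreover have "(\<Sum>u\<in>V. \<Sum>v\<in>V. moran_prob V w r S u v) = (\<Sum>u\<in>V. fit u) / (\<Sum>u\<in>V. fit u)"
    by (simp add: moran_prob_def fit_def flip: sum_distrib_left sum_divide_distrib cong: sum.cong)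
       (simp add: rows)
  ultimately show ?thesis by simp
qed

lemma moran_step_absorbing:
  assumes G: "evolutionary_graph V w" and r: "r > 0"
    and stay: "\<And>u v. u \<in> V \<Longrightarrow> v \<in> V \<Longrightarrow> moran_succ S u v = S"
  shows "moran_step V w r f S = f S"
proof -
  have "moran_step V w r f S = (\<Sum>u\<in>V. \<Sum>v\<in>V. moran_prob V w r S u v) * f S"
    unfolding moran_step_eq_sum by (simp add: stay sum_distrib_right)
  then show ?thesis by (simp add: moran_prob_sum[OF G r])
qed

lemma moran_step_full:
  "evolutionary_graph V w \<Longrightarrow> r > 0 \<Longrightarrow> moran_step V w r f V = f V"
  by (rule moran_step_absorbing) (auto simp: moran_succ_def)

lemma moran_step_empty:
  "evolutionary_graph V w \<Longrightarrow> r > 0 \<Longrightarrow> moran_step V w r f {} = f {}"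
  by (rule moran_step_absorbing) (auto simp: moran_succ_def)

lemma moran_step_contract:
  assumes G: "evolutionary_graph V w" and r: "r > 0" and S: "S \<subseteq> V"
    and bound: "\<And>T. T \<subseteq> V \<Longrightarrow> \<bar>f T\<bar> \<le> M" and fV: "f V = 0" and f0: "f {} = 0"
    and u0: "u0 \<in> V" and v0: "v0 \<in> V" and absorbed: "moran_succ S u0 v0 \<in> {V, {}}"
    and \<delta>: "\<delta> \<le> moran_prob V w r S u0 v0"
  shows "\<bar>moran_step V w r f S\<bar> \<le> (1 - \<delta>) * M"
proof -
  let ?p = "moran_prob V w r S" and ?T = "moran_succ S"
  define q where "q u v = ?p u v * M - (if u = u0 \<and> v = v0 then ?p u v * M else 0)" for u v
  have fin: "finite V" using G unfolding evolutionary_graph_def by simp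
  have M: "M \<ge> 0" using bound[of V] by simp
  have term_bound: "\<bar>?p u v * f (?T u v)\<bar> \<le> q u v" if "u \<in> V" "v \<in> V" for u v
  proof (cases "u = u0 \<and> v = v0")
    case True
    then show ?thesis using absorbed fV f0 by (auto simp: q_def)
  next
    case False
    have "?T u v \<subseteq> V" using S that by (auto simp: moran_succ_def)
    then show ?thesis
      using False bound moran_prob_nonneg[OF G r that]
      by (simp add: q_def abs_mult mult_left_mono del: de_Morgan_conj)
  qed
  have "(\<Sum>u\<in>V. \<Sum>v\<in>V. q u v) = (\<Sum>u\<in>V. \<Sum>v\<in>V. ?p u v * M) - ?p u0 v0 * M"
    using fin u0 v0 by (simp add: q_def sum_subtractf if_if_eq_conj[symmetric] cong: if_cong)
      (subst sum.swap, simp)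
  also have "\<dots> = (1 - ?p u0 v0) * M"
    by (simp add: moran_prob_sum[OF G r] flip: sum_distrib_right) (simp add: algebra_simps)
  finally have q_sum: "(\<Sum>u\<in>V. \<Sum>v\<in>V. q u v) = (1 - ?p u0 v0) * M" .
  have "\<bar>moran_step V w r f S\<bar> \<le> (\<Sum>u\<in>V. \<Sum>v\<in>V. \<bar>?p u v * f (?T u v)\<bar>)"
    unfolding moran_step_eq_sum by (rule order_trans[OF sum_abs sum_mono[OF sum_abs]])
  also have "\<dots> \<le> (\<Sum>u\<in>V. \<Sum>v\<in>V. q u v)"
    by (intro sum_mono term_bound)
  also have "\<dots> \<le> (1 - \<delta>) * M"
    unfolding q_sum using \<delta> M by (intro mult_right_mono) auto
  finally show ?thesis .
qed

lemma all_mutant_prob_Suc: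
  "all_mutant_prob V w r (Suc t) = moran_step V w r (all_mutant_prob V w r t)"
  unfolding all_mutant_prob_def by simp

lemma all_mutant_prob_full:
  assumes "evolutionary_graph V w" "r > 0"
  shows "all_mutant_prob V w r t V = 1"
  by (induction t) (simp_all add: all_mutant_prob_def moran_step_full[OF assms])

lemma all_mutant_prob_empty:
  assumes "evolutionary_graph V w" "r > 0"
  shows "all_mutant_prob V w r t {} = 0"
proof -
  have "V \<noteq> {}" using assms(1) unfolding evolutionary_graph_def by simp
  then show ?thesis
    by (induction t) (simp_all add: all_mutant_prob_def moran_step_empty[OF assms])
qed

lemma harmonic_minus_all_mutant_prob_bound:
  assumes G: "evolutionary_graph V w" and r: "r > 0"
    and harmonic: "\<And>S. S \<subseteq> V \<Longrightarrow> moran_step V w r h S = h S"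
    and hV: "h V = 1" and h0: "h {} = 0" and hB: "\<And>S. S \<subseteq> V \<Longrightarrow> \<bar>h S\<bar> \<le> B"
    and \<delta>: "\<delta> \<le> 1"
    and absorption: "\<And>S. S \<subseteq> V \<Longrightarrow> S \<noteq> V \<Longrightarrow> S \<noteq> {} \<Longrightarrow>
      \<exists>u\<in>V. \<exists>v\<in>V. moran_succ S u v \<in> {V, {}} \<and> \<delta> \<le> moran_prob V w r S u v"
    and S: "S \<subseteq> V"
  shows "\<bar>h S - all_mutant_prob V w r t S\<bar> \<le> (B + 1) * (1 - \<delta>) ^ t"
  using S
proof (induction t arbitrary: S)
  case 0
  then show ?case
    using hB[OF 0] by (auto simp: all_mutant_prob_def abs_le_iff)
next
  case (Suc t)
  define e where "e S = h S - all_mutant_prob V w r t S" for S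
  have e_boundary: "e V = 0" "e {} = 0"
    using hV h0 all_mutant_prob_full[OF G r] all_mutant_prob_empty[OF G r] by (simp_all add: e_def)
  have "h S - all_mutant_prob V w r (Suc t) S = moran_step V w r e S"
    unfolding e_def all_mutant_prob_Suc moran_step_diff harmonic[OF Suc.prems] ..
  also have "\<bar>\<dots>\<bar> \<le> (1 - \<delta>) * ((B + 1) * (1 - \<delta>) ^ t)"
  proof (cases "S = V \<or> S = {}")
    case True
    then have "moran_step V w r e S = 0"
      using e_boundary moran_step_full[OF G r] moran_step_empty[OF G r] by auto
    moreover have "0 \<le> B" using hB[of V] by simp
    ultimately show ?thesis using \<delta> by simp
  next
    case False
    then obtain u v where "u \<in> V" "v \<in> V" "moran_succ S u v \<in> {V, {}}"
      "\<delta> \<le> moran_prob V w r S u v"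
      using absorption[OF Suc.prems] by blast
    then show ?thesis
      using Suc e_boundary by (intro moran_step_contract[OF G r]) (simp_all add: e_def)
  qed
  finally show ?case by (simp add: mult_ac)
qed

lemma fixation_prob_eq_harmonic:
  assumes G: "evolutionary_graph V w" and r: "r > 0"
    and harmonic: "\<And>S. S \<subseteq> V \<Longrightarrow> moran_step V w r h S = h S"
    and hV: "h V = 1" and h0: "h {} = 0" and hB: "\<And>S. S \<subseteq> V \<Longrightarrow> \<bar>h S\<bar> \<le> B"
    and \<delta>: "0 < \<delta>" "\<delta> \<le> 1"
    and absorption: "\<And>S. S \<subseteq> V \<Longrightarrow> S \<noteq> V \<Longrightarrow> S \<noteq> {} \<Longrightarrow>
      \<exists>u\<in>V. \<exists>v\<in>V. moran_succ S u v \<in> {V, {}} \<and> \<delta> \<le> moran_prob V w r S u v"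
    and S: "S \<subseteq> V"
  shows "fixation_prob V w r S = h S"
proof -
  have "(\<lambda>t. h S - all_mutant_prob V w r t S) \<longlonglongrightarrow> 0"
  proof (rule tendsto_0_le[where K = "B + 1"])
    show "(\<lambda>t. (1 - \<delta>) ^ t) \<longlonglongrightarrow> 0"
      using \<delta> by (intro LIMSEQ_power_zero) auto
    show "\<forall>\<^sub>F t in sequentially. norm (h S - all_mutant_prob V w r t S) \<le> norm ((1 - \<delta>) ^ t) * (B + 1)"
      using harmonic_minus_all_mutant_prob_bound[OF assms(1-6) \<delta>(2) absorption S] \<delta>
      by (intro always_eventually allI) (simp add: mult_ac)
  qed
  then have "(\<lambda>t. all_mutant_prob V w r t S) \<longlonglongrightarrow> h S"
    using tendsto_diff[OF tendsto_const[of "h S"]] by fastforce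
  then show ?thesis unfolding fixation_prob_def by (rule limI)
qed

definition triangle :: "nat set" where
  "triangle = {0, 1, 2}"

definition triangle_weight :: "nat \<Rightarrow> nat \<Rightarrow> real" where
  "triangle_weight u v =
     (if u = v then 0 else if u = 0 then 1/2 else if v = 0 then 3/4 else 1/4)"

lemma power2_add_self_add_one_pos: "0 < (r::real)^2 + r + 1"
proof -
  have "r^2 + r + 1 = (r + 1/2)^2 + 3/4"
    by (simp add: power2_eq_square algebra_simps)
  then show ?thesis
    by (metis add_nonneg_pos zero_le_power2 zero_less_divide_iff zero_less_numeral)
qed

definition triangle_denom :: "real \<Rightarrow> real" where
  "triangle_denom r = (r + 1) * (r^2 + r + 1)"

lemma triangle_denom_pos: "r > -1 \<Longrightarrow> triangle_denom r > 0"
  unfolding triangle_denom_def using power2_add_self_add_one_pos by simp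

definition fix_hub :: "real \<Rightarrow> real" where
  "fix_hub r = r^2 * (2*r + 1) / (2 * triangle_denom r)"

definition fix_leaf :: "real \<Rightarrow> real" where
  "fix_leaf r = r^2 * (4*r + 5) / (4 * triangle_denom r)"

definition fix_leaves :: "real \<Rightarrow> real" where
  "fix_leaves r = r * (2*r^2 + 4*r + 3) / (2 * triangle_denom r)"

definition fix_hub_leaf :: "real \<Rightarrow> real" where
  "fix_hub_leaf r = r * (2*r + 1) * (2*r + 3) / (4 * triangle_denom r)"

definition triangle_fixation :: "real \<Rightarrow> nat set \<Rightarrow> real" where
  "triangle_fixation r S =
     (if 0 \<in> S \<and> 1 \<in> S \<and> 2 \<in> S then 1
      else if 0 \<in> S \<and> (1 \<in> S \<or> 2 \<in> S) then fix_hub_leaf r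
      else if 1 \<in> S \<and> 2 \<in> S then fix_leaves r
      else if 0 \<in> S then fix_hub r
      else if 1 \<in> S \<or> 2 \<in> S then fix_leaf r
      else 0)"

text \<open>The invariance of triangle_fixation under a Moran step at the states {0}, {1}, {1, 2} and
  {0, 1}, with the total fitness cleared from the denominators.\<close>

lemma triangle_fixation_equations:
  assumes "r > (-1::real)"
  shows "fix_hub r * (2*r + 3) = 2 * r * fix_hub_leaf r"
    and "fix_leaf r * (4*r + 3) = r * (3 * fix_hub_leaf r + fix_leaves r)"
    and "fix_leaves r * (3*r + 2) = 3*r + 2 * fix_leaf r"
    and "fix_hub_leaf r * (3*r + 4) = 3*r + 3 * fix_leaf r + fix_hub r"
  using triangle_denom_pos[of r] assms
  unfolding fix_hub_def fix_leaf_def fix_leaves_def fix_hub_leaf_def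
  by (simp_all add: field_simps) (simp_all add: triangle_denom_def algebra_simps power2_eq_square)

lemma evolutionary_graph_triangle: "evolutionary_graph triangle triangle_weight"
  unfolding evolutionary_graph_def triangle_def triangle_weight_def by simp

lemma not_isothermal_triangle: "\<not> isothermal triangle triangle_weight"
  unfolding isothermal_def triangle_def triangle_weight_def by simp

lemma subset_triangle_cases:
  assumes "S \<subseteq> triangle"
  obtains "S = {}" | "S = {0}" | "S = {1}" | "S = {2}" | "S = {1, 2}" | "S = {0, 1}"
    | "S = {0, 2}" | "S = triangle"
proof -
  have "S = (if 0 \<in> S then {0} else {}) \<union> (if 1 \<in> S then {1} else {}) \<union> (if 2 \<in> S then {2} else {})"
    using assms by (auto simp: triangle_def)
  then show ?thesis using that by (auto simp: triangle_def insert_commute split: if_splits)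
qed

lemma triangle_fixation_harmonic:
  assumes r: "r > 1" and S: "S \<subseteq> triangle"
  shows "moran_step triangle triangle_weight r (triangle_fixation r) S = triangle_fixation r S"
proof -
  have transient: "\<forall>S\<in>{{0}, {1}, {2}, {1, 2}, {0, 1}, {0, 2}}.
      moran_step triangle triangle_weight r (triangle_fixation r) S = triangle_fixation r S"
    using r triangle_fixation_equations[of r]
    by (simp add: moran_step_def triangle_def triangle_weight_def triangle_fixation_def Let_def,
      simp add: divide_simps, intro conjI; algebra)
  have "r > 0" using r by simp
  then show ?thesis
    using transient moran_step_full[OF evolutionary_graph_triangle]
      moran_step_empty[OF evolutionary_graph_triangle]
    by (cases rule: subset_triangle_cases[OF S]) (auto simp: triangle_fixation_def triangle_def)
qed

lemma triangle_one_step_absorption: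
  assumes r: "r > 1" and S: "S \<subseteq> triangle" "S \<noteq> triangle" "S \<noteq> {}"
  shows "\<exists>u\<in>triangle. \<exists>v\<in>triangle. moran_succ S u v \<in> {triangle, {}} \<and>
    1 / (6*r) \<le> moran_prob triangle triangle_weight r S u v"
proof -
  have witness: ?thesis if "u \<in> triangle" "v \<in> triangle" "moran_succ S u v \<in> {triangle, {}}"
    "1 / (6*r) \<le> moran_prob triangle triangle_weight r S u v" for u v
    using that by blast
  have sq: "r < r * r" using r by simp
  note defs = moran_succ_def moran_prob_def triangle_def triangle_weight_def insert_commute divide_simps
  show ?thesis
  proof (cases rule: subset_triangle_cases[OF S(1)])
    case 2
    show ?thesis by (rule witness[of 1 0]; use r in \<open>simp add: defs 2\<close>; use sq in linarith)
  next
    case 3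
    show ?thesis by (rule witness[of 0 1]; use r in \<open>simp add: defs 3\<close>; use sq in linarith)
  next
    case 4
    show ?thesis by (rule witness[of 0 2]; use r in \<open>simp add: defs 4\<close>; use sq in linarith)
  next
    case 5
    show ?thesis by (rule witness[of 1 0]; use r in \<open>simp add: defs 5\<close>; use sq in linarith)
  next
    case 6
    show ?thesis by (rule witness[of 0 2]; use r in \<open>simp add: defs 6\<close>; use sq in linarith)
  next
    case 7
    show ?thesis by (rule witness[of 0 1]; use r in \<open>simp add: defs 7\<close>; use sq in linarith)
  qed (use S in simp_all)
qed

lemma fixation_prob_triangle:
  assumes r: "r > 1" and S: "S \<subseteq> triangle"
  shows "fixation_prob triangle triangle_weight r S = triangle_fixation r S"
proof (rule fixation_prob_eq_harmonic[OF evolutionary_graph_triangle, where \<delta> = "1 / (6*r)"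
    and B = "1 + \<bar>fix_hub r\<bar> + \<bar>fix_leaf r\<bar> + \<bar>fix_leaves r\<bar> + \<bar>fix_hub_leaf r\<bar>"])
  show "0 < r" "0 < 1 / (6*r)" "1 / (6*r) \<le> 1"
    using r by simp_all
  show "triangle_fixation r triangle = 1" "triangle_fixation r {} = 0"
    by (simp_all add: triangle_fixation_def triangle_def)
  show "\<bar>triangle_fixation r T\<bar> \<le> 1 + \<bar>fix_hub r\<bar> + \<bar>fix_leaf r\<bar> + \<bar>fix_leaves r\<bar> + \<bar>fix_hub_leaf r\<bar>"
    for T
    unfolding triangle_fixation_def by auto
  show "\<And>T. T \<subseteq> triangle \<Longrightarrow> moran_step triangle triangle_weight r (triangle_fixation r) T = triangle_fixation r T"
    using triangle_fixation_harmonic[OF r] .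
  show "\<And>T. T \<subseteq> triangle \<Longrightarrow> T \<noteq> triangle \<Longrightarrow> T \<noteq> {} \<Longrightarrow>
      \<exists>u\<in>triangle. \<exists>v\<in>triangle. moran_succ T u v \<in> {triangle, {}} \<and>
        1 / (6*r) \<le> moran_prob triangle triangle_weight r T u v"
    using triangle_one_step_absorption[OF r] .
qed (rule S)

lemma fix_hub_fix_leaf_average:
  assumes "r > (-1::real)"
  shows "(fix_hub r + 2 * fix_leaf r) / 3 = r^2 / (r^2 + r + 1)"
proof -
  have "(fix_hub r + 2 * fix_leaf r) / 3 = r^2 * (r + 1) / triangle_denom r"
    using triangle_denom_pos[of r] assms
    unfolding fix_hub_def fix_leaf_def by (simp add: field_simps)
  also have "\<dots> = r^2 / (r^2 + r + 1)"
    using assms by (simp add: triangle_denom_def)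
  finally show ?thesis .
qed

lemma rho_reg_3:
  assumes "r \<noteq> 0" "r \<noteq> 1"
  shows "rho_reg r 3 = r^2 / (r^2 + r + 1)"
proof -
  have "r^3 - 1 = (r - 1) * (r^2 + r + 1)"
    by (simp add: algebra_simps power2_eq_square power3_eq_cube)
  then show ?thesis
    using assms power2_add_self_add_one_pos[of r] unfolding rho_reg_def
    by (simp add: divide_simps) (simp add: algebra_simps power2_eq_square)
qed

theorem proposition1p12:
  shows "\<exists>(V :: nat set) (w :: nat \<Rightarrow> nat \<Rightarrow> real).
           evolutionary_graph V w \<and> \<not> isothermal V w \<and>
           (\<forall>r::real. r > 1 \<longrightarrow> fixation_prob_uniform V w r = rho_reg r (card V))"
proof (intro exI conjI allI impI)
  show "evolutionary_graph triangle triangle_weight" by (rule evolutionary_graph_triangle)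
  show "\<not> isothermal triangle triangle_weight" by (rule not_isothermal_triangle)
  fix r :: real
  assume r: "r > 1"
  have "fixation_prob_uniform triangle triangle_weight r = (fix_hub r + 2 * fix_leaf r) / 3"
    by (simp add: fixation_prob_uniform_def fixation_prob_triangle[OF r])
      (simp add: triangle_def triangle_fixation_def)
  also have "\<dots> = r^2 / (r^2 + r + 1)"
    using r by (simp add: fix_hub_fix_leaf_average)
  also have "\<dots> = rho_reg r 3"
    using r by (simp add: rho_reg_3)
  also have "3 = card triangle"
    by (simp add: triangle_def)
  finally show "fixation_prob_uniform triangle triangle_weight r = rho_reg r (card triangle)" .
qed

end
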